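(* Let $(M,\rho)$ be a metric space, let $f,g:M\to\mathbb{R}\cup\{+\infty\}$, and let $\lambda\in\mathbb{R}$ be such that $L_\lambda(f-g)\cap\operatorname{dom} f\cap\operatorname{dom} g\neq\varnothing$. Let $M_1:=L_\lambda(f-g)$ and $f_1:=f|_{M_1}$, regarded as a function on the metric space $(M_1,\rho)$. If $x\in M_1\cap\operatorname{dom} g$ satisfies $|\nabla f|(x)>|\nabla g|(x)$, then $|\nabla f_1|(x)=|\nabla f|(x)$.
   Context: Functions take values in $\mathbb{R}\cup\{+\infty\}$; $\operatorname{dom} f:=\{x:f(x)<+\infty\}$; the expression $\infty-\infty$ is undefined. For $\lambda\in\mathbb{R}$, $L_\lambda(f-g):=\{x\in\operatorname{dom} f:\ f(x)-g(x)\le\lambda\}$ (where $f(x)-g(x)=-\infty$ if $g(x)=+\infty$). $[t]^+:=\max\{0,t\}$, with $[f(x)-f(y)]^+:=0$ if $f(y)=+\infty$. For $x\in\operatorname{dom} f$, the local slope is $|\nabla f|(x):=\limsup_{y\to x,\,y\neq x}\frac{[f(x)-f(y)]^+}{\rho(x,y)}\in[0,+\infty]$ (equal to $0$ at isolated points); for a restriction to a subset, the slope is computed in the subspace metric, i.e. with $y$ ranging over the subset. *)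

theory Defs
  imports "HOL-Analysis.Analysis" "HOL-Library.Extended_Real"
begin

text \<open>Functions take values in ereal; the value -\<infinity> is excluded by explicit hypotheses.\<close>

definition edom :: "('a \<Rightarrow> ereal) \<Rightarrow> 'a set" where
  "edom f = {x. f x < \<infinity>}"

text \<open>Sublevel set L_lambda(f-g) = {x in dom f. f x - g x <= lambda}, with f x - g x = -infinity if g x = infinity.\<close>
definition sublevel :: "('a \<Rightarrow> ereal) \<Rightarrow> ('a \<Rightarrow> ereal) \<Rightarrow> real \<Rightarrow> 'a set" where
  "sublevel f g lam = {x \<in> edom f. g x = \<infinity> \<or> f x - g x \<le> ereal lam}"

definition posdiff :: "ereal \<Rightarrow> ereal \<Rightarrow> ereal" where
  "posdiff a b = (if b = \<infinity> then 0 else max 0 (a - b))"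

definition slope :: "'a::metric_space set \<Rightarrow> ('a \<Rightarrow> ereal) \<Rightarrow> 'a \<Rightarrow> ereal" where
  "slope S f x = (if trivial_limit (at x within S) then 0
     else Limsup (at x within S) (\<lambda>y. posdiff (f x) (f y) / ereal (dist x y)))"

end

theory Submission
  imports Defs
begin

text \<open>
  Near a point where \<open>f\<close> descends strictly faster than \<open>g\<close>, a steep descent of \<open>f\<close> can only
  be accompanied by a slow descent of \<open>g\<close>, so \<open>f - g\<close> decreases and the point stays in the
  sublevel set. Hence the steep directions of \<open>f\<close> that determine its slope are frequently
  realised inside the sublevel set, and the limsup over the sublevel set equals the full one.
\<close>

lemma Limsup_filter_mono:
  fixes X :: "'a \<Rightarrow> 'b::complete_linorder"
  assumes "F \<le> G"
  shows "Limsup F X \<le> Limsup G X"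
proof (subst Limsup_le_iff, intro allI impI)
  fix y
  assume "Limsup G X < y"
  then have "eventually (\<lambda>x. X x < y) G"
    by (rule Limsup_lessD)
  then show "eventually (\<lambda>x. y > X x) F"
    by (rule filter_leD[OF assms])
qed

lemma eventually_at_of_at_within:
  "eventually P (at x within S) \<Longrightarrow> eventually (\<lambda>y. y \<in> S \<longrightarrow> P y) (at x)"
  by (simp add: eventually_at_filter)

lemma at_within_nontrivial:
  assumes "\<exists>\<^sub>F y in at x. y \<in> S"
  shows "at x within S \<noteq> bot"
proof
  assume "at x within S = bot"
  then have "eventually (\<lambda>y. y \<notin> S) (at x)"
    using eventually_at_of_at_within[of "\<lambda>_. False" x S] by simp
  with assms show False
    by (simp add: frequently_def)
qed

lemma Limsup_within_eq_Limsup: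
  fixes Q :: "'a::topological_space \<Rightarrow> 'b::{complete_linorder, dense_linorder}"
  assumes "t < Limsup (at x) Q"
    and frequent: "\<And>c. t < c \<Longrightarrow> c < Limsup (at x) Q \<Longrightarrow> \<exists>\<^sub>F y in at x. y \<in> S \<and> c < Q y"
  shows "Limsup (at x within S) Q = Limsup (at x) Q"
proof (rule antisym)
  show "Limsup (at x within S) Q \<le> Limsup (at x) Q"
    by (rule Limsup_filter_mono[OF at_le]) simp
  show "Limsup (at x) Q \<le> Limsup (at x within S) Q"
  proof (rule ccontr)
    assume "\<not> ?thesis"
    then have "max t (Limsup (at x within S) Q) < Limsup (at x) Q"
      using assms(1) by (simp add: not_le)
    from dense[OF this] obtain c
      where c: "max t (Limsup (at x within S) Q) < c" "c < Limsup (at x) Q"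
      by blast
    then have "eventually (\<lambda>y. Q y < c) (at x within S)"
      by (intro Limsup_lessD) (simp add: max_less_iff_conj)
    then have "eventually (\<lambda>y. \<not> (y \<in> S \<and> c < Q y)) (at x)"
      by (rule eventually_mono[OF eventually_at_of_at_within]) (blast dest: less_asym)
    with frequent[of c] c show False
      by (simp add: frequently_def)
  qed
qed

definition diff_quotient :: "('a::metric_space \<Rightarrow> ereal) \<Rightarrow> 'a \<Rightarrow> 'a \<Rightarrow> ereal" where
  "diff_quotient f x y = posdiff (f x) (f y) / ereal (dist x y)"

lemma diff_quotient_nonneg: "0 \<le> diff_quotient f x y"
  unfolding diff_quotient_def posdiff_def by (auto intro!: zero_le_divide_ereal)

lemma slope_trivial: "at x within S = bot \<Longrightarrow> slope S f x = 0"
  by (simp add: slope_def)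

lemma slope_eq_Limsup:
  "at x within S \<noteq> bot \<Longrightarrow> slope S f x = Limsup (at x within S) (diff_quotient f x)"
  by (simp add: slope_def diff_quotient_def[abs_def])

lemma posdiff_ereal: "posdiff (ereal u) (ereal v) = ereal (max 0 (u - v))"
  by (auto simp: posdiff_def max_def)

lemma sublevel_mem_of_diff_quotients:
  fixes f g :: "'a::metric_space \<Rightarrow> ereal"
  assumes nf: "\<forall>y. f y \<noteq> -\<infinity>" and ng: "\<forall>y. g y \<noteq> -\<infinity>"
    and x: "x \<in> sublevel f g lam" and gx: "x \<in> edom g" and "y \<noteq> x"
    and flat_g: "diff_quotient g x y < ereal c"
    and steep_f: "ereal c < diff_quotient f x y"
  shows "y \<in> sublevel f g lam"
proof -
  have d: "dist x y > 0" using \<open>y \<noteq> x\<close> by simp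
  have "0 < ereal c"
    using diff_quotient_nonneg[of g x y] flat_g by (rule le_less_trans)
  then have "0 < c" by simp
  obtain a where a: "f x = ereal a" using x nf unfolding sublevel_def edom_def
    by (cases "f x") auto
  obtain b where b: "g x = ereal b" using gx ng unfolding edom_def by (cases "g x") auto
  have lam: "a - b \<le> lam" using x a b unfolding sublevel_def by auto
  have "f y \<noteq> \<infinity>"
    using steep_f \<open>0 < c\<close> by (auto simp: diff_quotient_def posdiff_def)
  then obtain a' where a': "f y = ereal a'" using nf by (cases "f y") auto
  have "c < max 0 (a - a') / dist x y"
    using steep_f a a' d by (simp add: diff_quotient_def posdiff_ereal del: ereal_max)
  with d have "c * dist x y < max 0 (a - a')"
    by (simp add: field_simps)
  with mult_pos_pos[OF \<open>0 < c\<close> d] have descent_f: "c * dist x y < a - a'"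
    by (simp add: less_max_iff_disj)
  show ?thesis
  proof (cases "g y = \<infinity>")
    case True
    then show ?thesis using a' unfolding sublevel_def edom_def by auto
  next
    case False
    then obtain b' where b': "g y = ereal b'" using ng by (cases "g y") auto
    have "max 0 (b - b') / dist x y < c"
      using flat_g b b' d by (simp add: diff_quotient_def posdiff_ereal del: ereal_max)
    with d have descent_g: "b - b' < c * dist x y"
      by (simp add: field_simps)
    from descent_f descent_g lam have "a' - b' \<le> lam" by linarith
    then show ?thesis using a' b' unfolding sublevel_def edom_def by auto
  qed
qed

lemma frequently_steep_in_sublevel:
  fixes f g :: "'a::metric_space \<Rightarrow> ereal"
  assumes nf: "\<forall>y. f y \<noteq> -\<infinity>" and ng: "\<forall>y. g y \<noteq> -\<infinity>"
    and x: "x \<in> sublevel f g lam" and gx: "x \<in> edom g"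
    and d: "slope UNIV g x < d" "d < slope UNIV f x"
  shows "\<exists>\<^sub>F y in at x. y \<in> sublevel f g lam \<and> d < diff_quotient f x y"
proof -
  have nontriv: "at x \<noteq> bot"
    using d slope_trivial[of x UNIV] by auto
  obtain c where c: "slope UNIV g x < ereal c" "ereal c < d"
    using ereal_dense2[OF d(1)] by blast
  have steep_f: "\<exists>\<^sub>F y in at x. d < diff_quotient f x y"
  proof (rule ccontr)
    assume "\<not> ?thesis"
    then have "eventually (\<lambda>y. diff_quotient f x y \<le> d) (at x)"
      by (simp add: not_frequently not_less)
    then have "slope UNIV f x \<le> d"
      using slope_eq_Limsup[OF nontriv] by (simp add: Limsup_bounded)
    with d(2) show False by simp
  qed
  have "eventually (\<lambda>y. diff_quotient g x y < ereal c) (at x)"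
    using c(1) slope_eq_Limsup[OF nontriv, of g] by (simp add: Limsup_lessD)
  then have "eventually (\<lambda>y. diff_quotient g x y < ereal c \<and> y \<noteq> x) (at x)"
    by (simp add: eventually_conj eventually_neq_at_within)
  with steep_f have "\<exists>\<^sub>F y in at x.
      (diff_quotient g x y < ereal c \<and> y \<noteq> x) \<and> d < diff_quotient f x y"
    by (rule frequently_eventually_conj)
  then show ?thesis
  proof (rule frequently_mono[rotated], safe)
    fix y
    assume "diff_quotient g x y < ereal c" "y \<noteq> x" "d < diff_quotient f x y"
    with c(2) show "y \<in> sublevel f g lam"
      by (intro sublevel_mem_of_diff_quotients[OF nf ng x gx]) auto
  qed
qed

theorem lemma2p4:
  fixes f g :: "'a::metric_space \<Rightarrow> ereal" and lam :: real and x :: 'a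
  assumes "\<forall>y. f y \<noteq> -\<infinity>" and "\<forall>y. g y \<noteq> -\<infinity>"
    and "sublevel f g lam \<inter> edom f \<inter> edom g \<noteq> {}"
    and "x \<in> sublevel f g lam" and "x \<in> edom g"
    and "slope UNIV f x > slope UNIV g x"
  shows "slope (sublevel f g lam) f x = slope UNIV f x"
proof -
  note frequent = frequently_steep_in_sublevel[OF assms(1,2,4,5)]
  have "at x \<noteq> bot"
    using assms(6) slope_trivial[of x UNIV] by auto
  note slope_f = slope_eq_Limsup[OF this, of f]
  obtain d where "slope UNIV g x < d" "d < slope UNIV f x"
    using dense[OF assms(6)] by blast
  from frequent[OF this] have "\<exists>\<^sub>F y in at x. y \<in> sublevel f g lam"
    by (rule frequently_elim1) simp
  then have "at x within sublevel f g lam \<noteq> bot"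
    by (rule at_within_nontrivial)
  moreover have "Limsup (at x within sublevel f g lam) (diff_quotient f x)
      = Limsup (at x) (diff_quotient f x)"
    using assms(6) frequent by (intro Limsup_within_eq_Limsup) (simp_all add: slope_f)
  ultimately show ?thesis
    by (simp add: slope_eq_Limsup slope_f)
qed

end
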